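(* Let $n > m \ge 1$ be integers with $n \ge 2m$, let $\mathbb{S} \subseteq \mathbb{R}$, and let $f:\mathbb{S}\to\mathbb{R}^n$ be a function. Let $U=\begin{bmatrix} U_1 & U_2\end{bmatrix}\in\mathbb{R}^{n\times n}$ be an orthogonal matrix with $U_1\in\mathbb{R}^{n\times m}$ and $U_2\in\mathbb{R}^{n\times(n-m)}$ (so $U_1^TU_1=\mathbb{I}_m$, $U_2^TU_2=\mathbb{I}_{n-m}$, $U_1^TU_2=0$), whose columns form a complete basis of the range of $f(\mu)$ for all $\mu\in\mathbb{S}$. Let $P\in\mathbb{R}^{n\times m}$ be a selection operator such that $P^TU_1$ is invertible, and let $\sigma_1\ge\sigma_2\ge\cdots\ge\sigma_m>0$ be the singular values of $P^TU_1$. For $\mu\in\mathbb{S}$ define the masked projection $\tilde f(\mu)=U_1(P^TU_1)^{-1}P^Tf(\mu)$ and the orthogonal projection $\hat f(\mu)=U_1U_1^Tf(\mu)$. Then for every $\mu\in\mathbb{S}$: (i) $\lVert f(\mu)-\tilde f(\mu)\rVert_2^2 \le \left(1+\sum_{i=1}^m \frac{1-\sigma_i^2}{\sigma_i^2}\right)\lVert(\mathbb{I}-U_1U_1^T)f(\mu)\rVert_2^2$; (ii) if $Z_1\in\mathbb{R}^{m\times m}$, $V_1\in\mathbb{R}^{m\times m}$, $V_2\in\mathbb{R}^{(n-m)\times(n-m)}$ are orthogonal matrices with $P^TU_1=Z_1\,\mathrm{diag}(\sigma_1,\dots,\sigma_m)\,V_1^T$ and $P^TU_2=Z_1\begin{bmatrix}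 \mathrm{diag}(\sqrt{1-\sigma_1^2},\dots,\sqrt{1-\sigma_m^2}) & 0\end{bmatrix}V_2^T$ (i.e. $V_2$ is the right singular matrix of $P^TU_2$ arising in the cosine–sine decomposition of the orthogonal matrix $\begin{bmatrix}P & \breve P\end{bmatrix}^T U$, where $\begin{bmatrix}P & \breve P\end{bmatrix}$ is a permutation matrix), and $y:=V_2^TU_2^Tf(\mu)\in\mathbb{R}^{n-m}$, then $$\lVert \tilde f(\mu)-\hat f(\mu)\rVert_2^2=\sum_{i=1}^m \frac{1-\sigma_i^2}{\sigma_i^2}\,y_i^2\le \sum_{i=1}^m \frac{1-\sigma_i^2}{\sigma_i^2}\,\lVert(\mathbb{I}-U_1U_1^T)f(\mu)\rVert_2^2 .$$
   Context: A selection (mask) operator $P\in\mathbb{R}^{n\times m}$ is a matrix whose columns are $m$ distinct columns $e_{j_1},\dots,e_{j_m}$ of the identity matrix $\mathbb{I}_n$, so that $P^Ty=(y_{j_1},\dots,y_{j_m})^T$. $\mathrm{diag}(a_1,\dots,a_m)$ is the diagonal matrix with diagonal entries $a_i$. $\lVert\cdot\rVert_2$ is the Euclidean norm. *)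

theory Defs
  imports "Jordan_Normal_Form.Gauss_Jordan_Elimination" "Jordan_Normal_Form.Char_Poly"
begin

definition selection_op :: "nat \<Rightarrow> nat \<Rightarrow> real mat \<Rightarrow> bool" where
  "selection_op n m P \<longleftrightarrow> P \<in> carrier_mat n m \<and>
     (\<exists>j :: nat \<Rightarrow> nat. inj_on j {0..<m} \<and> (\<forall>i<m. j i < n \<and> col P i = unit_vec n (j i)))"

definition orthogonal_mat :: "nat \<Rightarrow> real mat \<Rightarrow> bool" where
  "orthogonal_mat k Q \<longleftrightarrow> Q \<in> carrier_mat k k \<and> transpose_mat Q * Q = 1\<^sub>m k"

definition singular_values :: "nat \<Rightarrow> real mat \<Rightarrow> (nat \<Rightarrow> real) \<Rightarrow> bool" where
  "singular_values k A \<sigma> \<longleftrightarrow> A \<in> carrier_mat k k \<and>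
     (\<forall>i<k. 0 \<le> \<sigma> i) \<and> (\<forall>i j. i \<le> j \<longrightarrow> j < k \<longrightarrow> \<sigma> j \<le> \<sigma> i) \<and>
     char_poly (transpose_mat A * A) = (\<Prod>i<k. [:- (\<sigma> i)\<^sup>2, 1:])"

definition sqnorm :: "real vec \<Rightarrow> real" where
  "sqnorm v = (\<Sum>i<dim_vec v. (v $ i)\<^sup>2)"

definition minv :: "real mat \<Rightarrow> real mat" where
  "minv A = the (mat_inverse A)"

end

theory Submission
  imports Defs "Jordan_Normal_Form.Schur_Decomposition" "HOL-Analysis.Convex"
begin

(* Write x = f(mu) = U1 a + U2 b with a = U1^T x and b = U2^T x, and put A = P^T U1, B = P^T U2 and
   M = A^-1 B. The masked projection is U1 (a + M b), the orthogonal projection is U1 a and the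
   residual (I - U1 U1^T) x is U2 b, so by orthogonality of U1 and U2 the two squared errors are
   |b|^2 + |M b|^2 and |M b|^2.
   Completeness of [U1 U2] gives A A^T + B B^T = I, hence M M^T = (A^T A)^-1 - I, whose trace is
   sum (1 - sigma_i^2) / sigma_i^2 (read off a Schur triangularisation of A^T A); the Frobenius
   bound |M b|^2 <= tr (M M^T) |b|^2 then gives (i). Under the cosine-sine decomposition
   M b = V1 E V2^T b with E = diag (sqrt (1 - sigma_i^2) / sigma_i), which is the identity in (ii);
   the inequality follows from sigma_i <= 1 (A is a contraction) and |V2^T b| = |b|. *)

definition trace_mat :: "'a::comm_ring_1 mat \<Rightarrow> 'a" where
  "trace_mat X = (\<Sum>i<dim_row X. X $$ (i, i))"

lemma trace_mat_mult_comm: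
  fixes X Y :: "'a::comm_ring_1 mat"
  assumes X: "X \<in> carrier_mat k l" and Y: "Y \<in> carrier_mat l k"
  shows "trace_mat (X * Y) = trace_mat (Y * X)"
proof -
  have "trace_mat (X * Y) = (\<Sum>i<k. \<Sum>j<l. X $$ (i, j) * Y $$ (j, i))"
    using X Y by (simp add: trace_mat_def scalar_prod_def lessThan_atLeast0)
  also have "\<dots> = (\<Sum>j<l. \<Sum>i<k. Y $$ (j, i) * X $$ (i, j))"
    by (subst sum.swap) (simp add: mult.commute)
  also have "\<dots> = trace_mat (Y * X)"
    using X Y by (simp add: trace_mat_def scalar_prod_def lessThan_atLeast0)
  finally show ?thesis .
qed

lemma trace_mat_similar:
  fixes X :: "'a::comm_ring_1 mat"
  assumes "similar_mat_wit X Y P Q"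
  shows "trace_mat X = trace_mat Y"
proof -
  obtain k where "X \<in> carrier_mat k k"
    using assms unfolding similar_mat_wit_def Let_def by blast
  note sim = similar_mat_witD2[OF this assms]
  have "trace_mat X = trace_mat (P * (Y * Q))"
    using sim by (simp add: assoc_mult_mat[of _ k k _ k _ k])
  also have "\<dots> = trace_mat (Y * Q * P)"
    using sim by (intro trace_mat_mult_comm[of _ k k]) auto
  also have "\<dots> = trace_mat Y"
    using sim by (simp add: assoc_mult_mat[of _ k k _ k _ k])
  finally show ?thesis .
qed

lemma diag_mult_upper_triangular:
  fixes X Y :: "'a::comm_ring_1 mat"
  assumes X: "X \<in> carrier_mat k k" "upper_triangular X"
    and Y: "Y \<in> carrier_mat k k" "upper_triangular Y" and i: "i < k"
  shows "(X * Y) $$ (i, i) = X $$ (i, i) * Y $$ (i, i)"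
proof -
  have "(X * Y) $$ (i, i) = (\<Sum>l\<in>{0..<k}. X $$ (i, l) * Y $$ (l, i))"
    using X Y i by (simp add: scalar_prod_def)
  also have "\<dots> = (\<Sum>l\<in>{i}. X $$ (i, l) * Y $$ (l, i))"
  proof (rule sum.mono_neutral_right)
    have "X $$ (i, l) * Y $$ (l, i) = 0" if "l < k" "l \<noteq> i" for l
    proof (cases "l < i")
      case True
      then show ?thesis using upper_triangularD[OF X(2), of l i] X(1) i by simp
    next
      case False
      then show ?thesis using upper_triangularD[OF Y(2), of i l] Y(1) that by simp
    qed
    then show "\<forall>l\<in>{0..<k} - {i}. X $$ (i, l) * Y $$ (l, i) = 0"
      by simp
  qed (use i in auto)
  finally show ?thesis by simp
qed

lemma left_inverse_upper_triangular:
  fixes B C :: "'a::field mat"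
  assumes B: "B \<in> carrier_mat k k" "upper_triangular B" and nz: "\<forall>i<k. B $$ (i, i) \<noteq> 0"
    and C: "C \<in> carrier_mat k k" and CB: "C * B = 1\<^sub>m k"
  shows "upper_triangular C"
proof (rule upper_triangularI)
  fix i j assume "j < i" and "i < dim_row C"
  then show "C $$ (i, j) = 0"
  proof (induction j rule: less_induct)
    case (less j)
    have "0 = (C * B) $$ (i, j)"
      using CB C less.prems by simp
    also have "\<dots> = (\<Sum>l\<in>{0..<k}. C $$ (i, l) * B $$ (l, j))"
      using B C less.prems by (simp add: scalar_prod_def)
    also have "\<dots> = (\<Sum>l\<in>{j}. C $$ (i, l) * B $$ (l, j))"
    proof (rule sum.mono_neutral_right)
      show "\<forall>l\<in>{0..<k} - {j}. C $$ (i, l) * B $$ (l, j) = 0"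
        using upper_triangularD[OF B(2)] B(1) less by (auto simp: nat_neq_iff)
    qed (use less.prems C in auto)
    finally have "C $$ (i, j) * B $$ (j, j) = 0" by simp
    then show ?case
      using nz C less.prems by simp
  qed
qed

lemma left_inverse_upper_triangular_diag:
  fixes B C :: "'a::field mat"
  assumes B: "B \<in> carrier_mat k k" "upper_triangular B" and nz: "\<forall>i<k. B $$ (i, i) \<noteq> 0"
    and C: "C \<in> carrier_mat k k" and CB: "C * B = 1\<^sub>m k" and i: "i < k"
  shows "C $$ (i, i) = 1 / B $$ (i, i)"
proof -
  have "C $$ (i, i) * B $$ (i, i) = 1"
    using diag_mult_upper_triangular[OF C left_inverse_upper_triangular[OF assms(1-5)] B i] CB i
    by simp
  then show ?thesis
    using nz i by (simp add: field_simps)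
qed

(* Conjugating Gi by a Schur form of G gives a left inverse of an upper triangular matrix,
   whose diagonal is the reciprocal of the eigenvalues. *)
lemma trace_mat_left_inverse:
  fixes G Gi :: "'a::conjugatable_ordered_field mat"
  assumes G: "G \<in> carrier_mat k k" and Gi: "Gi \<in> carrier_mat k k" and GiG: "Gi * G = 1\<^sub>m k"
    and char_poly: "char_poly G = (\<Prod>i<k. [:- e i, 1:])" and nz: "\<forall>i<k. e i \<noteq> 0"
  shows "trace_mat Gi = (\<Sum>i<k. 1 / e i)"
proof -
  obtain B P Q where schur: "schur_decomposition G (map e [0..<k]) = (B, P, Q)"
    by (cases "schur_decomposition G (map e [0..<k])") auto
  have "char_poly G = (\<Prod>x\<leftarrow>map e [0..<k]. [:- x, 1:])"
    unfolding char_poly by (induction k) (simp_all add: mult.commute)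
  from schur_decomposition[OF G this schur]
  have sim: "similar_mat_wit G B P Q" and ut: "upper_triangular B"
    and diag: "diag_mat B = map e [0..<k]" by auto
  note sim' = similar_mat_witD2[OF G sim]
  have B_diag: "B $$ (i, i) = e i" if "i < k" for i
    using arg_cong[OF diag, of "\<lambda>xs. xs ! i"] sim' that by (simp add: diag_mat_def)
  define Bi where "Bi = Q * Gi * P"
  have Bi: "Bi \<in> carrier_mat k k"
    using sim' Gi by (simp add: Bi_def)
  have "Gi = P * Bi * Q"
  proof -
    have "P * Bi * Q = (P * Q) * Gi * (P * Q)"
      unfolding Bi_def using sim'(6,7) Gi by (simp add: assoc_mult_mat[of _ k k _ k _ k])
    then show ?thesis
      using sim'(1) Gi by simp
  qed
  then have sim_inv: "similar_mat_wit Gi Bi P Q"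
    unfolding similar_mat_wit_def Let_def using sim' Gi Bi by auto
  have BiB: "Bi * B = 1\<^sub>m k"
  proof -
    have "Bi * B = Q * (Gi * (P * Q) * G) * P"
      unfolding Bi_def sim'(3) using sim' Gi by (simp add: assoc_mult_mat[of _ k k _ k _ k])
    also have "\<dots> = 1\<^sub>m k"
      using sim' Gi GiG by simp
    finally show ?thesis .
  qed
  have "trace_mat Gi = trace_mat Bi"
    by (rule trace_mat_similar[OF sim_inv])
  also have "\<dots> = (\<Sum>i<k. Bi $$ (i, i))"
    using Bi by (simp add: trace_mat_def)
  also have "\<dots> = (\<Sum>i<k. 1 / e i)"
    using left_inverse_upper_triangular_diag[OF sim'(5) ut _ Bi BiB] B_diag nz by simp
  finally show ?thesis .
qed

lemma sqnorm_eq_scalar_prod: "sqnorm v = v \<bullet> (v :: real vec)"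
  by (simp add: sqnorm_def scalar_prod_def power2_eq_square lessThan_atLeast0)

lemma sq_le_sqnorm: "i < dim_vec v \<Longrightarrow> (v $ i)\<^sup>2 \<le> sqnorm v"
  unfolding sqnorm_def by (rule member_le_sum) auto

lemma sqnorm_unit_vec:
  assumes "i < k"
  shows "sqnorm (unit_vec k i) = 1"
proof -
  have "sqnorm (unit_vec k i) = (\<Sum>j<k. if j = i then 1 else 0)"
    unfolding sqnorm_def by (rule sum.cong) (auto simp: unit_vec_def)
  then show ?thesis
    using assms by simp
qed

lemma sqnorm_mult_isometry:
  assumes W: "W \<in> carrier_mat p q" and WW: "transpose_mat W * W = 1\<^sub>m q"
    and v: "v \<in> carrier_vec q"
  shows "sqnorm (W *\<^sub>v v) = sqnorm v"
proof -
  have "(W *\<^sub>v v) \<bullet> (W *\<^sub>v v) = (transpose_mat W *\<^sub>v (W *\<^sub>v v)) \<bullet> v"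
    using transpose_vec_mult_scalar[OF W v, of "W *\<^sub>v v"] W v by simp
  also have "transpose_mat W *\<^sub>v (W *\<^sub>v v) = v"
    using W v WW by (simp flip: assoc_mult_mat_vec)
  finally show ?thesis
    by (simp add: sqnorm_eq_scalar_prod)
qed

lemma sqnorm_minus_orthogonal:
  fixes u w :: "real vec"
  assumes u: "u \<in> carrier_vec k" and w: "w \<in> carrier_vec k" and orth: "u \<bullet> w = 0"
  shows "sqnorm (u - w) = sqnorm u + sqnorm w"
proof -
  have "w \<bullet> u = 0"
    using orth comm_scalar_prod[OF u w] by simp
  then show ?thesis
    using u w orth by (simp add: sqnorm_eq_scalar_prod minus_scalar_prod_distrib scalar_prod_minus_distrib)
qed

lemma sqnorm_mult_vec_le_trace:
  assumes M: "M \<in> carrier_mat p q" and v: "v \<in> carrier_vec q"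
  shows "sqnorm (M *\<^sub>v v) \<le> trace_mat (M * transpose_mat M) * sqnorm v"
proof -
  have "sqnorm (M *\<^sub>v v) = (\<Sum>i<p. (\<Sum>j<q. M $$ (i, j) * v $ j)\<^sup>2)"
    using M v by (simp add: sqnorm_def scalar_prod_def lessThan_atLeast0)
  also have "\<dots> \<le> (\<Sum>i<p. (\<Sum>j<q. (M $$ (i, j))\<^sup>2) * (\<Sum>j<q. (v $ j)\<^sup>2))"
    by (intro sum_mono Cauchy_Schwarz_ineq_sum)
  also have "\<dots> = trace_mat (M * transpose_mat M) * sqnorm v"
    using M v by (simp add: trace_mat_def sqnorm_def scalar_prod_def lessThan_atLeast0
        sum_distrib_right power2_eq_square)
  finally show ?thesis .
qed

lemma orthogonal_mat_transpose:
  assumes "orthogonal_mat k Q"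
  shows "orthogonal_mat k (transpose_mat Q)"
  using assms mat_mult_left_right_inverse[of "transpose_mat Q" k Q]
  by (simp add: orthogonal_mat_def)

lemma selection_op_orthonormal:
  assumes "selection_op n m P"
  shows "transpose_mat P * P = 1\<^sub>m m"
proof -
  from assms obtain j where P: "P \<in> carrier_mat n m" and inj: "inj_on j {0..<m}"
    and cols: "\<forall>i<m. j i < n \<and> col P i = unit_vec n (j i)"
    unfolding selection_op_def by blast
  show ?thesis
  proof (rule eq_matI)
    fix i k assume "i < dim_row (1\<^sub>m m)" "k < dim_col (1\<^sub>m m)"
    then have i: "i < m" and k: "k < m" by auto
    have "(transpose_mat P * P) $$ (i, k) = unit_vec n (j i) \<bullet> unit_vec n (j k)"
      using P cols i k by simp
    also have "\<dots> = 1\<^sub>m m $$ (i, k)"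
      using cols i k inj unfolding inj_on_def by auto
    finally show "(transpose_mat P * P) $$ (i, k) = 1\<^sub>m m $$ (i, k)" .
  qed (use P in auto)
qed

lemma sqnorm_transpose_selection_le:
  assumes "selection_op n m P" and w: "w \<in> carrier_vec n"
  shows "sqnorm (transpose_mat P *\<^sub>v w) \<le> sqnorm w"
proof -
  from assms obtain j where P: "P \<in> carrier_mat n m" and inj: "inj_on j {0..<m}"
    and cols: "\<forall>i<m. j i < n \<and> col P i = unit_vec n (j i)"
    unfolding selection_op_def by blast
  have "sqnorm (transpose_mat P *\<^sub>v w) = (\<Sum>i<m. (w $ j i)\<^sup>2)"
    unfolding sqnorm_def using P cols w by simp
  also have "\<dots> = (\<Sum>l\<in>j ` {..<m}. (w $ l)\<^sup>2)"
    using inj by (simp add: sum.reindex lessThan_atLeast0)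
  also have "\<dots> \<le> (\<Sum>l<n. (w $ l)\<^sup>2)"
    using cols by (intro sum_mono2) auto
  finally show ?thesis
    using w by (simp add: sqnorm_def)
qed

lemma orthonormal_blocks_complete:
  fixes U1 U2 :: "'a::field mat"
  assumes U1: "U1 \<in> carrier_mat n m" and U2: "U2 \<in> carrier_mat n k" and n: "n = m + k"
    and U1_U1: "transpose_mat U1 * U1 = 1\<^sub>m m" and U2_U2: "transpose_mat U2 * U2 = 1\<^sub>m k"
    and U1_U2: "transpose_mat U1 * U2 = 0\<^sub>m m k"
  shows "U1 * transpose_mat U1 + U2 * transpose_mat U2 = 1\<^sub>m n" (is "?X = _")
proof -
  \<comment> \<open>the square matrix [U1 U2], padded with empty rows so that block multiplication applies\<close>
  define U where "U = four_block_mat U1 U2 (0\<^sub>m 0 m) (0\<^sub>m 0 k)"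
  have U1t: "transpose_mat U1 \<in> carrier_mat m n" and U2t: "transpose_mat U2 \<in> carrier_mat k n"
    using U1 U2 by auto
  have U: "U \<in> carrier_mat n n"
    unfolding U_def carrier_mat_def using U1 U2 n by (simp add: four_block_mat_def Let_def)
  have Ut: "transpose_mat U = four_block_mat (transpose_mat U1) (0\<^sub>m m 0) (transpose_mat U2) (0\<^sub>m k 0)"
    unfolding U_def using transpose_four_block_mat[OF U1 U2 zero_carrier_mat zero_carrier_mat]
    by simp
  have U2_U1: "transpose_mat U2 * U1 = 0\<^sub>m k m"
    using arg_cong[OF U1_U2, of transpose_mat] transpose_mult[OF U1t U2] U1 U2 by simp
  have "transpose_mat U * U = four_block_mat (1\<^sub>m m) (0\<^sub>m m k) (0\<^sub>m k m) (1\<^sub>m k)"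
    unfolding Ut unfolding U_def using U1 U2 U1_U1 U2_U2 U1_U2 U2_U1
    by (simp add: mult_four_block_mat[OF U1t zero_carrier_mat U2t zero_carrier_mat
          U1 U2 zero_carrier_mat zero_carrier_mat])
  then have "transpose_mat U * U = 1\<^sub>m n"
    using n by simp
  then have "U * transpose_mat U = 1\<^sub>m n"
    using mat_mult_left_right_inverse[of "transpose_mat U" n U] U by simp
  moreover have "U * transpose_mat U = four_block_mat ?X (0\<^sub>m n 0) (0\<^sub>m 0 n) (0\<^sub>m 0 0)"
    unfolding Ut unfolding U_def using U1 U2
    by (simp add: mult_four_block_mat[OF U1 U2 zero_carrier_mat zero_carrier_mat
          U1t zero_carrier_mat U2t zero_carrier_mat])
  ultimately have blocks: "four_block_mat ?X (0\<^sub>m n 0) (0\<^sub>m 0 n) (0\<^sub>m 0 0) = 1\<^sub>m n"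
    by simp
  show ?thesis
  proof (rule eq_matI)
    fix i j assume "i < dim_row (1\<^sub>m n)" "j < dim_col (1\<^sub>m n)"
    then show "?X $$ (i, j) = 1\<^sub>m n $$ (i, j)"
      using arg_cong[OF blocks, of "\<lambda>X. X $$ (i, j)"] U1 U2 by simp
  qed (use U1 U2 in auto)
qed

lemma minv_inverse:
  assumes A: "A \<in> carrier_mat k k" and "invertible_mat A"
  shows "minv A \<in> carrier_mat k k" and "A * minv A = 1\<^sub>m k" and "minv A * A = 1\<^sub>m k"
proof -
  from assms obtain C where AC: "A * C = 1\<^sub>m k" and CA: "C * A = 1\<^sub>m (dim_row C)"
    unfolding invertible_mat_def inverts_mat_def by auto
  have C: "C \<in> carrier_mat k k"
    using arg_cong[OF AC, of dim_col] arg_cong[OF CA, of dim_col] A by auto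
  have "A \<in> Units (ring_mat TYPE(real) k ())"
    unfolding Units_def ring_mat_simps using A C AC CA by auto
  then obtain D where "mat_inverse A = Some D"
    using mat_inverse(1)[OF A, where b = "()"] by fastforce
  then show "minv A \<in> carrier_mat k k" and "A * minv A = 1\<^sub>m k" and "minv A * A = 1\<^sub>m k"
    using mat_inverse(2)[OF A] by (auto simp: minv_def)
qed

lemma gram_mat_mult:
  fixes X Y :: "'a::comm_semiring_0 mat"
  assumes X: "X \<in> carrier_mat a b" and Y: "Y \<in> carrier_mat b c"
  shows "(X * Y) * transpose_mat (X * Y) = X * (Y * transpose_mat Y) * transpose_mat X"
  using X Y by (simp add: transpose_mult[OF X Y] assoc_mult_mat[of _ a b _ c _ a]
      assoc_mult_mat[of _ b c _ b _ a] assoc_mult_mat[of _ a b _ b _ a])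

lemma gram_left_inverse_mult:
  fixes A B Ai :: "'a::comm_ring_1 mat"
  assumes A: "A \<in> carrier_mat k k" and B: "B \<in> carrier_mat k l" and Ai: "Ai \<in> carrier_mat k k"
    and AiA: "Ai * A = 1\<^sub>m k"
    and rows: "A * transpose_mat A + B * transpose_mat B = 1\<^sub>m k"
  shows "(Ai * B) * transpose_mat (Ai * B) = Ai * transpose_mat Ai - 1\<^sub>m k"
proof -
  have BB: "B * transpose_mat B = 1\<^sub>m k - A * transpose_mat A"
  proof (rule eq_matI)
    fix i j assume ij: "i < dim_row (1\<^sub>m k - A * transpose_mat A)" "j < dim_col (1\<^sub>m k - A * transpose_mat A)"
    have "(B * transpose_mat B) $$ (i, j)
        = (A * transpose_mat A + B * transpose_mat B) $$ (i, j) - (A * transpose_mat A) $$ (i, j)"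
      using ij A B by simp
    then show "(B * transpose_mat B) $$ (i, j) = (1\<^sub>m k - A * transpose_mat A) $$ (i, j)"
      unfolding rows using ij A by simp
  qed (use A B in auto)
  have "(Ai * B) * transpose_mat (Ai * B) = Ai * (1\<^sub>m k - A * transpose_mat A) * transpose_mat Ai"
    unfolding gram_mat_mult[OF Ai B] BB ..
  also have "\<dots> = (Ai - Ai * (A * transpose_mat A)) * transpose_mat Ai"
    using Ai A by (simp add: mult_minus_distrib_mat[of Ai k k "1\<^sub>m k" k])
  also have "\<dots> = Ai * transpose_mat Ai - Ai * (A * transpose_mat A) * transpose_mat Ai"
    using Ai A
    by (simp add: minus_mult_distrib_mat[of Ai k k "Ai * (A * transpose_mat A)" "transpose_mat Ai" k])
  also have "\<dots> = Ai * transpose_mat Ai - (Ai * A) * transpose_mat (Ai * A)"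
    unfolding gram_mat_mult[OF Ai A] ..
  also have "\<dots> = Ai * transpose_mat Ai - 1\<^sub>m k"
    using AiA by simp
  finally show ?thesis .
qed

definition rect_diag_mat :: "nat \<Rightarrow> nat \<Rightarrow> (nat \<Rightarrow> 'a::zero) \<Rightarrow> 'a mat" where
  "rect_diag_mat k q d = mat k q (\<lambda>(i, j). if i = j then d i else 0)"

lemma rect_diag_mat_carrier [simp]: "rect_diag_mat k q d \<in> carrier_mat k q"
  by (simp add: rect_diag_mat_def)

lemma rect_diag_mat_mult_vec:
  fixes d :: "nat \<Rightarrow> 'a::semiring_0"
  assumes "k \<le> q" and y: "y \<in> carrier_vec q"
  shows "rect_diag_mat k q d *\<^sub>v y = vec k (\<lambda>i. d i * y $ i)"
proof (rule eq_vecI)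
  fix i assume "i < dim_vec (vec k (\<lambda>i. d i * y $ i))"
  then have i: "i < k" by simp
  have "(rect_diag_mat k q d *\<^sub>v y) $ i = (\<Sum>j\<in>{0..<q}. (if i = j then d i else 0) * y $ j)"
    using i assms unfolding rect_diag_mat_def by (simp add: scalar_prod_def)
  also have "\<dots> = (\<Sum>j\<in>{0..<q}. if j = i then d i * y $ i else 0)"
    by (rule sum.cong) auto
  also have "\<dots> = d i * y $ i"
    using i assms by simp
  finally show "(rect_diag_mat k q d *\<^sub>v y) $ i = vec k (\<lambda>i. d i * y $ i) $ i"
    using i by simp
qed (simp add: rect_diag_mat_def)

lemma sqnorm_rect_diag_mult_vec:
  assumes "k \<le> q" and "y \<in> carrier_vec q"
  shows "sqnorm (rect_diag_mat k q d *\<^sub>v y) = (\<Sum>i<k. (d i * y $ i)\<^sup>2)"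
  using assms by (simp add: rect_diag_mat_mult_vec sqnorm_def)

lemma singular_value_le_one:
  assumes A: "A \<in> carrier_mat k k" and contr: "\<forall>v\<in>carrier_vec k. sqnorm (A *\<^sub>v v) \<le> sqnorm v"
    and Z: "orthogonal_mat k Z" and V: "orthogonal_mat k V"
    and svd: "A = Z * rect_diag_mat k k \<sigma> * transpose_mat V" and i: "i < k"
  shows "(\<sigma> i)\<^sup>2 \<le> 1"
proof -
  have Zc: "Z \<in> carrier_mat k k" and Vc: "V \<in> carrier_mat k k"
    using Z V by (auto simp: orthogonal_mat_def)
  define v where "v = V *\<^sub>v unit_vec k i"
  have v: "v \<in> carrier_vec k"
    using Vc by (simp add: v_def)
  have "transpose_mat V *\<^sub>v v = unit_vec k i"
    using V Vc by (simp add: v_def orthogonal_mat_def flip: assoc_mult_mat_vec)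
  then have "sqnorm (A *\<^sub>v v) = sqnorm (Z *\<^sub>v (rect_diag_mat k k \<sigma> *\<^sub>v unit_vec k i))"
    using Zc Vc v by (simp add: svd assoc_mult_mat_vec[of _ k k _ k])
  also have "\<dots> = sqnorm (rect_diag_mat k k \<sigma> *\<^sub>v unit_vec k i)"
    using Z by (intro sqnorm_mult_isometry[OF Zc] mult_mat_vec_carrier[OF rect_diag_mat_carrier])
      (auto simp: orthogonal_mat_def)
  also have "\<dots> = (\<Sum>j<k. (\<sigma> j * unit_vec k i $ j)\<^sup>2)"
    by (rule sqnorm_rect_diag_mult_vec) auto
  also have "\<dots> = (\<Sum>j<k. if j = i then (\<sigma> i)\<^sup>2 else 0)"
    by (rule sum.cong) (auto simp: unit_vec_def)
  finally have "sqnorm (A *\<^sub>v v) = (\<sigma> i)\<^sup>2"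
    using i by simp
  moreover have "sqnorm v = 1"
    using V Vc i by (simp add: v_def orthogonal_mat_def sqnorm_mult_isometry sqnorm_unit_vec)
  ultimately show ?thesis
    using contr v by metis
qed

locale masked_projection =
  fixes n m :: nat and U1 U2 P :: "real mat"
  assumes m_le_n: "m \<le> n"
    and U1: "U1 \<in> carrier_mat n m" and U2: "U2 \<in> carrier_mat n (n - m)"
    and U1_orthonormal: "transpose_mat U1 * U1 = 1\<^sub>m m"
    and U2_orthonormal: "transpose_mat U2 * U2 = 1\<^sub>m (n - m)"
    and U1_U2_orthogonal: "transpose_mat U1 * U2 = 0\<^sub>m m (n - m)"
    and selection: "selection_op n m P"
    and invertible: "invertible_mat (transpose_mat P * U1)"
begin

abbreviation A :: "real mat" where "A \<equiv> transpose_mat P * U1"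
abbreviation B :: "real mat" where "B \<equiv> transpose_mat P * U2"

definition M :: "real mat" where "M = minv A * B"

lemma P_carrier: "P \<in> carrier_mat n m"
  using selection by (simp add: selection_op_def)

lemma A_carrier: "A \<in> carrier_mat m m"
  using P_carrier U1 by simp

lemma B_carrier: "B \<in> carrier_mat m (n - m)"
  using P_carrier U2 by simp

lemmas minv_A = minv_inverse[OF A_carrier invertible]

lemma M_carrier: "M \<in> carrier_mat m (n - m)"
  using minv_A(1) B_carrier by (simp add: M_def)

lemma projector_sum: "U1 * transpose_mat U1 + U2 * transpose_mat U2 = 1\<^sub>m n"
  using m_le_n
  by (intro orthonormal_blocks_complete[OF U1 U2 _ U1_orthonormal U2_orthonormal U1_U2_orthogonal])
    simp

lemma A_B_rows_orthonormal: "A * transpose_mat A + B * transpose_mat B = 1\<^sub>m m"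
proof -
  have Pt: "transpose_mat P \<in> carrier_mat m n"
    using P_carrier by simp
  have "A * transpose_mat A + B * transpose_mat B
      = transpose_mat P * (U1 * transpose_mat U1) * P + transpose_mat P * (U2 * transpose_mat U2) * P"
    using gram_mat_mult[OF Pt U1] gram_mat_mult[OF Pt U2] by simp
  also have "\<dots> = transpose_mat P * (U1 * transpose_mat U1 + U2 * transpose_mat U2) * P"
    using Pt U1 U2 P_carrier
    by (simp add: add_mult_distrib_mat[of _ m n] mult_add_distrib_mat[of "transpose_mat P" m n _ n])
  also have "\<dots> = 1\<^sub>m m"
    using projector_sum selection_op_orthonormal[OF selection] Pt by simp
  finally show ?thesis .
qed

lemma M_gram: "M * transpose_mat M = minv A * transpose_mat (minv A) - 1\<^sub>m m"
  unfolding M_def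
  by (rule gram_left_inverse_mult[OF A_carrier B_carrier minv_A(1) minv_A(3) A_B_rows_orthonormal])

lemma trace_M_gram:
  assumes sv: "singular_values m A \<sigma>" and pos: "\<forall>i<m. 0 < \<sigma> i"
  shows "trace_mat (M * transpose_mat M) = (\<Sum>i<m. (1 - (\<sigma> i)\<^sup>2) / (\<sigma> i)\<^sup>2)"
proof -
  let ?Ai = "minv A"
  have "transpose_mat ?Ai * transpose_mat A = 1\<^sub>m m"
    using transpose_mult[OF A_carrier minv_A(1)] minv_A(2) by simp
  moreover have "?Ai * transpose_mat ?Ai * (transpose_mat A * A)
      = ?Ai * (transpose_mat ?Ai * transpose_mat A) * A"
    using minv_A(1) A_carrier by (simp add: assoc_mult_mat[of _ m m _ m _ m])
  ultimately have "?Ai * transpose_mat ?Ai * (transpose_mat A * A) = 1\<^sub>m m"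
    using minv_A by simp
  then have "trace_mat (?Ai * transpose_mat ?Ai) = (\<Sum>i<m. 1 / (\<sigma> i)\<^sup>2)"
    using minv_A(1) A_carrier sv pos
    by (intro trace_mat_left_inverse[where e = "\<lambda>i. (\<sigma> i)\<^sup>2"]) (auto simp: singular_values_def)
  then have "trace_mat (M * transpose_mat M) = (\<Sum>i<m. 1 / (\<sigma> i)\<^sup>2 - 1)"
    using minv_A(1) by (simp add: M_gram trace_mat_def sum_subtractf)
  also have "\<dots> = (\<Sum>i<m. (1 - (\<sigma> i)\<^sup>2) / (\<sigma> i)\<^sup>2)"
    using pos by (intro sum.cong) (auto simp: field_simps)
  finally show ?thesis .
qed

lemma U2_orthogonal_U1:
  assumes b: "b \<in> carrier_vec (n - m)" and c: "c \<in> carrier_vec m"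
  shows "(U2 *\<^sub>v b) \<bullet> (U1 *\<^sub>v c) = 0"
proof -
  have "(U2 *\<^sub>v b) \<bullet> (U1 *\<^sub>v c) = (transpose_mat U1 *\<^sub>v (U2 *\<^sub>v b)) \<bullet> c"
    using transpose_vec_mult_scalar[OF U1 c, of "U2 *\<^sub>v b"] U2 b by simp
  also have "transpose_mat U1 *\<^sub>v (U2 *\<^sub>v b) = 0\<^sub>m m (n - m) *\<^sub>v b"
    using U1_U2_orthogonal U1 U2 b by (simp flip: assoc_mult_mat_vec)
  also have "\<dots> = 0\<^sub>v m"
    using b by (intro eq_vecI) (auto simp: scalar_prod_def)
  finally show ?thesis
    using c by simp
qed

context
  fixes x :: "real vec"
  assumes x: "x \<in> carrier_vec n"
begin

lemma orthogonal_decomposition: "x = U1 *\<^sub>v (transpose_mat U1 *\<^sub>v x) + U2 *\<^sub>v (transpose_mat U2 *\<^sub>v x)"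
proof -
  have "x = (U1 * transpose_mat U1 + U2 * transpose_mat U2) *\<^sub>v x"
    using projector_sum x by simp
  also have "\<dots> = U1 *\<^sub>v (transpose_mat U1 *\<^sub>v x) + U2 *\<^sub>v (transpose_mat U2 *\<^sub>v x)"
    using U1 U2 x by (simp add: add_mult_distrib_mat_vec[of _ n n])
  finally show ?thesis .
qed

lemma masked_projection_eq:
  "U1 * minv A * transpose_mat P *\<^sub>v x
    = U1 *\<^sub>v (transpose_mat U1 *\<^sub>v x) + U1 *\<^sub>v (M *\<^sub>v (transpose_mat U2 *\<^sub>v x))"
proof -
  let ?a = "transpose_mat U1 *\<^sub>v x" and ?b = "transpose_mat U2 *\<^sub>v x"
  have a: "?a \<in> carrier_vec m" and b: "?b \<in> carrier_vec (n - m)"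
    using U1 U2 x by auto
  have "transpose_mat P *\<^sub>v x = transpose_mat P *\<^sub>v (U1 *\<^sub>v ?a + U2 *\<^sub>v ?b)"
    by (rule arg_cong[OF orthogonal_decomposition])
  also have "\<dots> = A *\<^sub>v ?a + B *\<^sub>v ?b"
    using P_carrier U1 U2 a b by (simp add: mult_add_distrib_mat_vec[of _ m n])
  finally have "minv A *\<^sub>v (transpose_mat P *\<^sub>v x) = minv A *\<^sub>v (A *\<^sub>v ?a) + minv A *\<^sub>v (B *\<^sub>v ?b)"
    using minv_A(1) A_carrier B_carrier a b by (simp add: mult_add_distrib_mat_vec[of _ m m])
  also have "minv A *\<^sub>v (A *\<^sub>v ?a) = ?a"
    using minv_A A_carrier a by (simp flip: assoc_mult_mat_vec)
  also have "minv A *\<^sub>v (B *\<^sub>v ?b) = M *\<^sub>v ?b"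
    using minv_A(1) B_carrier b by (simp add: M_def assoc_mult_mat_vec[of _ m m _ "n - m"])
  finally have masked_coordinates: "minv A *\<^sub>v (transpose_mat P *\<^sub>v x) = ?a + M *\<^sub>v ?b" .
  have "U1 * minv A * transpose_mat P *\<^sub>v x = U1 *\<^sub>v (minv A *\<^sub>v (transpose_mat P *\<^sub>v x))"
    using U1 minv_A(1) P_carrier x
    by (simp add: assoc_mult_mat_vec[of _ n m _ n] assoc_mult_mat_vec[of _ n m _ m])
  also have "\<dots> = U1 *\<^sub>v ?a + U1 *\<^sub>v (M *\<^sub>v ?b)"
    unfolding masked_coordinates using M_carrier b by (intro mult_add_distrib_mat_vec[OF U1 a]) simp
  finally show ?thesis .
qed

lemma residual_eq: "(1\<^sub>m n - U1 * transpose_mat U1) *\<^sub>v x = U2 *\<^sub>v (transpose_mat U2 *\<^sub>v x)"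
proof -
  have "(1\<^sub>m n - U1 * transpose_mat U1) *\<^sub>v x = x - U1 *\<^sub>v (transpose_mat U1 *\<^sub>v x)"
    using U1 x by (simp add: minus_mult_distrib_mat_vec[of _ n n])
  also have "\<dots> = U2 *\<^sub>v (transpose_mat U2 *\<^sub>v x)"
    using U1 U2 x by (subst orthogonal_decomposition) (rule eq_vecI; auto)
  finally show ?thesis .
qed

lemma sqnorm_residual:
  "sqnorm ((1\<^sub>m n - U1 * transpose_mat U1) *\<^sub>v x) = sqnorm (transpose_mat U2 *\<^sub>v x)"
  using U2 x by (simp add: residual_eq sqnorm_mult_isometry[OF U2 U2_orthonormal])

lemma sqnorm_masked_error:
  "sqnorm (x - U1 * minv A * transpose_mat P *\<^sub>v x)
    = sqnorm (transpose_mat U2 *\<^sub>v x) + sqnorm (M *\<^sub>v (transpose_mat U2 *\<^sub>v x))"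
proof -
  let ?a = "transpose_mat U1 *\<^sub>v x" and ?b = "transpose_mat U2 *\<^sub>v x"
  have a: "?a \<in> carrier_vec m" and b: "?b \<in> carrier_vec (n - m)" and Mb: "M *\<^sub>v ?b \<in> carrier_vec m"
    using U1 U2 x M_carrier by auto
  have "x - U1 * minv A * transpose_mat P *\<^sub>v x = U2 *\<^sub>v ?b - U1 *\<^sub>v (M *\<^sub>v ?b)"
    unfolding masked_projection_eq using U1 U2 a b Mb
    by (subst orthogonal_decomposition) (rule eq_vecI; auto)
  also have "sqnorm \<dots> = sqnorm (U2 *\<^sub>v ?b) + sqnorm (U1 *\<^sub>v (M *\<^sub>v ?b))"
    using U1 U2 b Mb by (intro sqnorm_minus_orthogonal[of _ n] U2_orthogonal_U1) auto
  finally show ?thesis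
    using b Mb by (simp add: sqnorm_mult_isometry[OF U2 U2_orthonormal]
        sqnorm_mult_isometry[OF U1 U1_orthonormal])
qed

lemma sqnorm_masked_minus_orthogonal:
  "sqnorm (U1 * minv A * transpose_mat P *\<^sub>v x - U1 * transpose_mat U1 *\<^sub>v x)
    = sqnorm (M *\<^sub>v (transpose_mat U2 *\<^sub>v x))"
proof -
  let ?a = "transpose_mat U1 *\<^sub>v x" and ?b = "transpose_mat U2 *\<^sub>v x"
  have a: "?a \<in> carrier_vec m" and Mb: "M *\<^sub>v ?b \<in> carrier_vec m"
    using U1 U2 x M_carrier by auto
  have "U1 * minv A * transpose_mat P *\<^sub>v x - U1 * transpose_mat U1 *\<^sub>v x = U1 *\<^sub>v (M *\<^sub>v ?b)"
    unfolding masked_projection_eq using U1 x a Mb by (intro eq_vecI) auto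
  then show ?thesis
    using Mb by (simp add: sqnorm_mult_isometry[OF U1 U1_orthonormal])
qed

lemma masked_error_bound:
  assumes "singular_values m A \<sigma>" and "\<forall>i<m. 0 < \<sigma> i"
  shows "sqnorm (x - U1 * minv A * transpose_mat P *\<^sub>v x)
    \<le> (1 + (\<Sum>i<m. (1 - (\<sigma> i)\<^sup>2) / (\<sigma> i)\<^sup>2)) * sqnorm ((1\<^sub>m n - U1 * transpose_mat U1) *\<^sub>v x)"
proof -
  let ?b = "transpose_mat U2 *\<^sub>v x" and ?S = "\<Sum>i<m. (1 - (\<sigma> i)\<^sup>2) / (\<sigma> i)\<^sup>2"
  have "sqnorm (M *\<^sub>v ?b) \<le> ?S * sqnorm ?b"
    using sqnorm_mult_vec_le_trace[OF M_carrier, of ?b] U2 x by (simp add: trace_M_gram[OF assms])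
  then show ?thesis
    by (simp add: sqnorm_masked_error sqnorm_residual distrib_right)
qed

end

lemma A_contraction:
  assumes v: "v \<in> carrier_vec m"
  shows "sqnorm (A *\<^sub>v v) \<le> sqnorm v"
proof -
  have "sqnorm (A *\<^sub>v v) = sqnorm (transpose_mat P *\<^sub>v (U1 *\<^sub>v v))"
    using P_carrier U1 v by simp
  also have "\<dots> \<le> sqnorm (U1 *\<^sub>v v)"
    using U1 v by (intro sqnorm_transpose_selection_le[OF selection]) simp
  also have "\<dots> = sqnorm v"
    by (rule sqnorm_mult_isometry[OF U1 U1_orthonormal v])
  finally show ?thesis .
qed

context
  fixes Z1 V1 V2 :: "real mat" and \<sigma> :: "nat \<Rightarrow> real"
  assumes Z1: "orthogonal_mat m Z1" and V1: "orthogonal_mat m V1" and V2: "orthogonal_mat (n - m) V2"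
    and A_svd: "A = Z1 * rect_diag_mat m m \<sigma> * transpose_mat V1"
    and B_svd: "B = Z1 * rect_diag_mat m (n - m) (\<lambda>i. sqrt (1 - (\<sigma> i)\<^sup>2)) * transpose_mat V2"
    and \<sigma>_pos: "\<forall>i<m. 0 < \<sigma> i"
    and m_le: "m \<le> n - m"
begin

lemma Z1_carrier: "Z1 \<in> carrier_mat m m" and V1_carrier: "V1 \<in> carrier_mat m m"
  and V2_carrier: "V2 \<in> carrier_mat (n - m) (n - m)"
  using Z1 V1 V2 by (auto simp: orthogonal_mat_def)

lemma singular_values_le_one: "i < m \<Longrightarrow> (\<sigma> i)\<^sup>2 \<le> 1"
  using singular_value_le_one[OF A_carrier _ Z1 V1 A_svd] A_contraction by blast

lemma M_mult_vec_eq_cs: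
  assumes b: "b \<in> carrier_vec (n - m)"
  shows "M *\<^sub>v b = V1 *\<^sub>v (rect_diag_mat m (n - m) (\<lambda>i. sqrt (1 - (\<sigma> i)\<^sup>2) / \<sigma> i)
    *\<^sub>v (transpose_mat V2 *\<^sub>v b))" (is "_ = V1 *\<^sub>v (?E *\<^sub>v ?y)")
proof -
  have y: "?y \<in> carrier_vec (n - m)"
    using V2_carrier b by simp
  note Ey = mult_mat_vec_carrier[OF rect_diag_mat_carrier y]
  have Ey_eq: "?E *\<^sub>v ?y = vec m (\<lambda>i. sqrt (1 - (\<sigma> i)\<^sup>2) / \<sigma> i * ?y $ i)"
    by (rule rect_diag_mat_mult_vec[OF m_le y])
  have "rect_diag_mat m m \<sigma> *\<^sub>v (?E *\<^sub>v ?y) = vec m (\<lambda>i. \<sigma> i * (?E *\<^sub>v ?y) $ i)"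
    by (rule rect_diag_mat_mult_vec[OF order_refl Ey])
  also have "\<dots> = vec m (\<lambda>i. sqrt (1 - (\<sigma> i)\<^sup>2) * ?y $ i)"
    using \<sigma>_pos by (intro eq_vecI) (auto simp: Ey_eq)
  also have "\<dots> = rect_diag_mat m (n - m) (\<lambda>i. sqrt (1 - (\<sigma> i)\<^sup>2)) *\<^sub>v ?y"
    by (rule rect_diag_mat_mult_vec[OF m_le y, symmetric])
  finally have diag_factor:
    "rect_diag_mat m m \<sigma> *\<^sub>v (?E *\<^sub>v ?y) = rect_diag_mat m (n - m) (\<lambda>i. sqrt (1 - (\<sigma> i)\<^sup>2)) *\<^sub>v ?y" .
  have V1_cancel: "transpose_mat V1 *\<^sub>v (V1 *\<^sub>v (?E *\<^sub>v ?y)) = ?E *\<^sub>v ?y"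
    using V1 V1_carrier Ey by (simp add: orthogonal_mat_def flip: assoc_mult_mat_vec)
  have "A *\<^sub>v (V1 *\<^sub>v (?E *\<^sub>v ?y)) = B *\<^sub>v b"
    using diag_factor V1_cancel Z1_carrier V1_carrier V2_carrier Ey b
    by (simp add: A_svd B_svd assoc_mult_mat_vec[of _ m m _ m] assoc_mult_mat_vec[of _ m m _ "n - m"]
        assoc_mult_mat_vec[of _ m "n - m" _ "n - m"])
  then have "M *\<^sub>v b = minv A *\<^sub>v (A *\<^sub>v (V1 *\<^sub>v (?E *\<^sub>v ?y)))"
    using minv_A(1) B_carrier b by (simp add: M_def assoc_mult_mat_vec[of _ m m _ "n - m"])
  also have "\<dots> = (minv A * A) *\<^sub>v (V1 *\<^sub>v (?E *\<^sub>v ?y))"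
    using minv_A(1) A_carrier V1_carrier Ey by (intro assoc_mult_mat_vec[symmetric]) auto
  also have "\<dots> = V1 *\<^sub>v (?E *\<^sub>v ?y)"
    using minv_A(3) V1_carrier Ey by simp
  finally show ?thesis .
qed

lemma sqnorm_M_mult_vec_eq_cs:
  assumes b: "b \<in> carrier_vec (n - m)"
  shows "sqnorm (M *\<^sub>v b) = (\<Sum>i<m. (1 - (\<sigma> i)\<^sup>2) / (\<sigma> i)\<^sup>2 * ((transpose_mat V2 *\<^sub>v b) $ i)\<^sup>2)"
proof -
  let ?y = "transpose_mat V2 *\<^sub>v b"
  have y: "?y \<in> carrier_vec (n - m)"
    using V2_carrier b by simp
  have "sqnorm (M *\<^sub>v b)
      = sqnorm (rect_diag_mat m (n - m) (\<lambda>i. sqrt (1 - (\<sigma> i)\<^sup>2) / \<sigma> i) *\<^sub>v ?y)"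
    unfolding M_mult_vec_eq_cs[OF b] using V1 mult_mat_vec_carrier[OF rect_diag_mat_carrier y]
    by (intro sqnorm_mult_isometry[OF V1_carrier]) (auto simp: orthogonal_mat_def)
  also have "\<dots> = (\<Sum>i<m. (sqrt (1 - (\<sigma> i)\<^sup>2) / \<sigma> i * ?y $ i)\<^sup>2)"
    by (rule sqnorm_rect_diag_mult_vec[OF m_le y])
  also have "\<dots> = (\<Sum>i<m. (1 - (\<sigma> i)\<^sup>2) / (\<sigma> i)\<^sup>2 * (?y $ i)\<^sup>2)"
  proof (rule sum.cong)
    fix i assume "i \<in> {..<m}"
    then have "0 \<le> 1 - (\<sigma> i)\<^sup>2"
      using singular_values_le_one by simp
    then show "(sqrt (1 - (\<sigma> i)\<^sup>2) / \<sigma> i * ?y $ i)\<^sup>2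
        = (1 - (\<sigma> i)\<^sup>2) / (\<sigma> i)\<^sup>2 * (?y $ i)\<^sup>2"
      by (simp add: power_mult_distrib power_divide)
  qed simp
  finally show ?thesis .
qed

lemma cs_weighted_sum_le:
  assumes b: "b \<in> carrier_vec (n - m)"
  shows "(\<Sum>i<m. (1 - (\<sigma> i)\<^sup>2) / (\<sigma> i)\<^sup>2 * ((transpose_mat V2 *\<^sub>v b) $ i)\<^sup>2)
    \<le> (\<Sum>i<m. (1 - (\<sigma> i)\<^sup>2) / (\<sigma> i)\<^sup>2) * sqnorm b"
proof -
  let ?y = "transpose_mat V2 *\<^sub>v b"
  have "sqnorm ?y = sqnorm b"
    using orthogonal_mat_transpose[OF V2] V2_carrier b
    by (intro sqnorm_mult_isometry[of _ "n - m" "n - m"]) (auto simp: orthogonal_mat_def)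
  moreover have "(?y $ i)\<^sup>2 \<le> sqnorm ?y" if "i < m" for i
    using that m_le V2_carrier by (intro sq_le_sqnorm) simp
  ultimately have "(\<Sum>i<m. (1 - (\<sigma> i)\<^sup>2) / (\<sigma> i)\<^sup>2 * (?y $ i)\<^sup>2)
      \<le> (\<Sum>i<m. (1 - (\<sigma> i)\<^sup>2) / (\<sigma> i)\<^sup>2 * sqnorm b)"
    using singular_values_le_one by (intro sum_mono mult_left_mono) auto
  then show ?thesis
    by (simp add: sum_distrib_right)
qed

lemma masked_deviation_cs:
  assumes x: "x \<in> carrier_vec n"
  shows "sqnorm (U1 * minv A * transpose_mat P *\<^sub>v x - U1 * transpose_mat U1 *\<^sub>v x)
      = (\<Sum>i<m. (1 - (\<sigma> i)\<^sup>2) / (\<sigma> i)\<^sup>2 * ((transpose_mat V2 * transpose_mat U2 *\<^sub>v x) $ i)\<^sup>2)"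
    and "(\<Sum>i<m. (1 - (\<sigma> i)\<^sup>2) / (\<sigma> i)\<^sup>2 * ((transpose_mat V2 * transpose_mat U2 *\<^sub>v x) $ i)\<^sup>2)
      \<le> (\<Sum>i<m. (1 - (\<sigma> i)\<^sup>2) / (\<sigma> i)\<^sup>2) * sqnorm ((1\<^sub>m n - U1 * transpose_mat U1) *\<^sub>v x)"
proof -
  have b: "transpose_mat U2 *\<^sub>v x \<in> carrier_vec (n - m)"
    using U2 x by simp
  have y: "transpose_mat V2 * transpose_mat U2 *\<^sub>v x = transpose_mat V2 *\<^sub>v (transpose_mat U2 *\<^sub>v x)"
    using V2_carrier U2 x by (simp add: assoc_mult_mat_vec[of _ "n - m" "n - m" _ n])
  show "sqnorm (U1 * minv A * transpose_mat P *\<^sub>v x - U1 * transpose_mat U1 *\<^sub>v x)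
      = (\<Sum>i<m. (1 - (\<sigma> i)\<^sup>2) / (\<sigma> i)\<^sup>2 * ((transpose_mat V2 * transpose_mat U2 *\<^sub>v x) $ i)\<^sup>2)"
    unfolding y sqnorm_masked_minus_orthogonal[OF x] by (rule sqnorm_M_mult_vec_eq_cs[OF b])
  show "(\<Sum>i<m. (1 - (\<sigma> i)\<^sup>2) / (\<sigma> i)\<^sup>2 * ((transpose_mat V2 * transpose_mat U2 *\<^sub>v x) $ i)\<^sup>2)
      \<le> (\<Sum>i<m. (1 - (\<sigma> i)\<^sup>2) / (\<sigma> i)\<^sup>2) * sqnorm ((1\<^sub>m n - U1 * transpose_mat U1) *\<^sub>v x)"
    unfolding y sqnorm_residual[OF x] by (rule cs_weighted_sum_le[OF b])
qed

end

end

theorem theorem1: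
  fixes n m :: nat and S :: "real set" and f :: "real \<Rightarrow> real vec"
    and U1 U2 P :: "real mat" and \<sigma> :: "nat \<Rightarrow> real"
  assumes "1 \<le> m" and "m < n" and "2 * m \<le> n"
    and f_dim: "\<forall>\<mu>\<in>S. f \<mu> \<in> carrier_vec n"
    and U1: "U1 \<in> carrier_mat n m" and U2: "U2 \<in> carrier_mat n (n - m)"
    and "transpose_mat U1 * U1 = 1\<^sub>m m"
    and "transpose_mat U2 * U2 = 1\<^sub>m (n - m)"
    and "transpose_mat U1 * U2 = 0\<^sub>m m (n - m)"
    and P: "selection_op n m P"
    and inv: "invertible_mat (transpose_mat P * U1)"
    and sv: "singular_values m (transpose_mat P * U1) \<sigma>"
    and sv_pos: "\<forall>i<m. 0 < \<sigma> i"
  shows "\<forall>\<mu>\<in>S.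
     (let ft = U1 * minv (transpose_mat P * U1) * transpose_mat P *\<^sub>v f \<mu>;
          fh = U1 * transpose_mat U1 *\<^sub>v f \<mu>;
          r = sqnorm ((1\<^sub>m n - U1 * transpose_mat U1) *\<^sub>v f \<mu>)
      in sqnorm (f \<mu> - ft) \<le> (1 + (\<Sum>i<m. (1 - (\<sigma> i)\<^sup>2) / (\<sigma> i)\<^sup>2)) * r
       \<and> (\<forall>Z1 V1 V2. orthogonal_mat m Z1 \<and> orthogonal_mat m V1 \<and> orthogonal_mat (n - m) V2
            \<and> transpose_mat P * U1
                = Z1 * mat m m (\<lambda>(i, j). if i = j then \<sigma> i else 0) * transpose_mat V1
            \<and> transpose_mat P * U2
                = Z1 * mat m (n - m) (\<lambda>(i, j). if i = j then sqrt (1 - (\<sigma> i)\<^sup>2) else 0)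
                     * transpose_mat V2
            \<longrightarrow> (let y = transpose_mat V2 * transpose_mat U2 *\<^sub>v f \<mu>
                 in sqnorm (ft - fh) = (\<Sum>i<m. (1 - (\<sigma> i)\<^sup>2) / (\<sigma> i)\<^sup>2 * (y $ i)\<^sup>2)
                  \<and> (\<Sum>i<m. (1 - (\<sigma> i)\<^sup>2) / (\<sigma> i)\<^sup>2 * (y $ i)\<^sup>2)
                      \<le> (\<Sum>i<m. (1 - (\<sigma> i)\<^sup>2) / (\<sigma> i)\<^sup>2) * r)))"
proof -
  interpret masked_projection n m U1 U2 P
    using assms by unfold_locales auto
  have m_le: "m \<le> n - m"
    using \<open>2 * m \<le> n\<close> by simp
  show ?thesis (is "\<forall>\<mu>\<in>S. ?P \<mu>")
  proof
    fix \<mu> assume "\<mu> \<in> S"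
    then have x: "f \<mu> \<in> carrier_vec n"
      using f_dim by blast
    note deviation = masked_deviation_cs[OF _ _ _ _ _ sv_pos m_le x, unfolded rect_diag_mat_def]
    show "?P \<mu>"
      unfolding Let_def
    proof (intro conjI allI impI, goal_cases)
      case 1
      show ?case
        by (rule masked_error_bound[OF x sv sv_pos])
    next
      case (2 Z1 V1 V2)
      then show ?case
        by (elim conjE) (rule deviation(1))
    next
      case (3 Z1 V1 V2)
      then show ?case
        by (elim conjE) (rule deviation(2))
    qed
  qed
qed

end
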